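(* Consider a run of the algorithm CTG (defined in the context) in which the events $\mathcal{E}_1,\mathcal{E}_2,\mathcal{E}_3$ (defined in the context) all hold. Then for every call CS$(w,\epsilon,\delta,S,u)$ made during the run: if $u$ is added to $S$ (the call returns true), then $\Delta f(S,u)\ge w-\epsilon$; if $u$ is not added to $S$ (the call returns false), then $\Delta f(S,u)\le w+\epsilon$.
   Context: Let $U$ be a finite ground set with $|U|=n$, and let $f:2^U\to\mathbb{R}_{\geq 0}$ be monotone and submodular. For $X\subseteq U$, $u\in U$, write $\Delta f(X,u)=f(X\cup\{u\})-f(X)$. Let $\kappa$ be a positive integer. There is no value oracle for $f$; instead, for any $X\subseteq U$, $u\in U$, one can draw independent samples from a distribution $\mathcal{D}(X,u)$ with $\mathbb{E}[\mathcal{D}(X,u)]=\Delta f(X,u)$ and all samples lying in $[0,R]$; all samples drawn are independent. Logarithms are natural; $h(\alpha)=\log(\kappa/\alpha)/\alpha$. For a call of CS on $(S,u)$, regard its samples as initial terms of an infinite i.i.d. sequence from $\mathcal{D}(S,u)$ and let $\widehat{\Delta f_t}(S,u)$ be the average of the first $t$ terms. Procedure CS$(w,\epsilon,\delta,S,u)$: let $N_2=R^2\log(6nh(\alpha)/\delta)/(2\epsilon^2)$. For $t=1,2,\dots,N_2$: draw the $t$-th sample, update $\widehat{\Delta f_t}(S,u)$, set $C_t=R\sqrt{\log(12nh(\alpha)t^2/\delta)/(2t)}$; if $\widehat{\Delta f_t}(S,u)-C_t\ge w-\epsilon$ return true; else if $\widehat{\Delta f_t}(S,u)+C_t\le w+\epsilon$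 return false. If the loop completes, return true iff $\widehat{\Delta f_{N_2}}(S,u)\ge w$. Algorithm CTG$(\epsilon,\delta,\alpha)$ with $\epsilon,\delta,\alpha\in(0,1)$: let $N_1=R^2\log(6n/\delta)/(2\epsilon^2)$. For each $s\in U$ let $\hat f(s)$ be the mean of $N_1$ samples from $\mathcal{D}(\emptyset,s)$, and let $d=\max_{s\in U}\hat f(s)$. Set $w\gets d$, $S\gets\emptyset$. While $w>\alpha d/\kappa$: for each $u\in U$ in turn, if $|S|<\kappa$, call CS$(w,\epsilon,\delta,S,u)$ and if it returns true set $S\gets S\cup\{u\}$; after the pass set $w\gets w(1-\alpha)$. Return $S$. Events: $\mathcal{E}_1$: $\max_{s\in U}f(\{s\})-\epsilon\le d\le\max_{s\in U}f(\{s\})+\epsilon$. $\mathcal{E}_2$: for every call of CS on a pair $(S,u)$ and every $t\in\mathbb{N}_+$, $|\widehat{\Delta f_t}(S,u)-\Delta f(S,u)|\le C_t$. $\mathcal{E}_3$: for every call of CS on a pair $(S,u)$, $|\widehat{\Delta f_{N_2}}(S,u)-\Delta f(S,u)|\le\epsilon$. *)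

theory Defs
  imports Complex_Main
begin

definition marg :: "('a set \<Rightarrow> real) \<Rightarrow> 'a set \<Rightarrow> 'a \<Rightarrow> real" where
  "marg f X u = f (X \<union> {u}) - f X"

definition monotone_set_fun :: "'a set \<Rightarrow> ('a set \<Rightarrow> real) \<Rightarrow> bool" where
  "monotone_set_fun U f \<longleftrightarrow> (\<forall>A B. A \<subseteq> B \<and> B \<subseteq> U \<longrightarrow> f A \<le> f B)"

definition submodular_set_fun :: "'a set \<Rightarrow> ('a set \<Rightarrow> real) \<Rightarrow> bool" where
  "submodular_set_fun U f \<longleftrightarrow>
     (\<forall>A B. A \<subseteq> U \<and> B \<subseteq> U \<longrightarrow> f (A \<union> B) + f (A \<inter> B) \<le> f A + f B)"

definition avg :: "(nat \<Rightarrow> real) \<Rightarrow> nat \<Rightarrow> real" where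
  "avg X t = (\<Sum>i<t. X i) / real t"

definition hfun :: "nat \<Rightarrow> real \<Rightarrow> real" where
  "hfun \<kappa> \<alpha> = ln (real \<kappa> / \<alpha>) / \<alpha>"

definition N2 :: "real \<Rightarrow> nat \<Rightarrow> nat \<Rightarrow> real \<Rightarrow> real \<Rightarrow> real \<Rightarrow> nat" where
  "N2 R n \<kappa> \<alpha> \<epsilon> \<delta> =
     nat \<lceil>R\<^sup>2 * ln (6 * real n * hfun \<kappa> \<alpha> / \<delta>) / (2 * \<epsilon>\<^sup>2)\<rceil>"

definition N1 :: "real \<Rightarrow> nat \<Rightarrow> real \<Rightarrow> real \<Rightarrow> nat" where
  "N1 R n \<epsilon> \<delta> = nat \<lceil>R\<^sup>2 * ln (6 * real n / \<delta>) / (2 * \<epsilon>\<^sup>2)\<rceil>"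

definition Cconf :: "real \<Rightarrow> nat \<Rightarrow> nat \<Rightarrow> real \<Rightarrow> real \<Rightarrow> nat \<Rightarrow> real" where
  "Cconf R n \<kappa> \<alpha> \<delta> t =
     R * sqrt (ln (12 * real n * hfun \<kappa> \<alpha> * (real t)\<^sup>2 / \<delta>) / (2 * real t))"

text \<open>Output of CS(w,eps,delta,S,u), as a function of the (infinite) sample sequence X
  of the call: the loop stops at the first t in 1..N2 where one of the two tests fires
  (the "true" test is checked first); otherwise the final test on the N2-average is used.\<close>
definition CS :: "real \<Rightarrow> nat \<Rightarrow> nat \<Rightarrow> real \<Rightarrow> real \<Rightarrow> real \<Rightarrow> real \<Rightarrow> (nat \<Rightarrow> real) \<Rightarrow> bool" where
  "CS R n \<kappa> \<alpha> w \<epsilon> \<delta> X =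
     (let N = N2 R n \<kappa> \<alpha> \<epsilon> \<delta>;
          C = Cconf R n \<kappa> \<alpha> \<delta>;
          T = {t. 1 \<le> t \<and> t \<le> N \<and>
                  (avg X t - C t \<ge> w - \<epsilon> \<or> avg X t + C t \<le> w + \<epsilon>)}
      in if T \<noteq> {} then (let t = Min T in avg X t - C t \<ge> w - \<epsilon>)
         else avg X N \<ge> w)"

text \<open>A record of a CS call: (w, S, u, index of the call, returned value).\<close>
type_synonym 'a call = "real \<times> 'a set \<times> 'a \<times> nat \<times> bool"

text \<open>One pass of the inner for-loop of CTG at threshold w over the elements (in list order).
  res w j is the result of the j-th CS call (j counts CS calls globally).\<close>
fun ctg_pass :: "(real \<Rightarrow> nat \<Rightarrow> bool) \<Rightarrow> nat \<Rightarrow> real \<Rightarrow> 'a list \<Rightarrow> 'a set \<Rightarrow> nat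
                  \<Rightarrow> 'a set \<times> nat \<times> 'a call list" where
  "ctg_pass res \<kappa> w [] S j = (S, j, [])"
| "ctg_pass res \<kappa> w (u # us) S j =
     (if card S < \<kappa> then
        (let b = res w j;
             S' = (if b then insert u S else S)
         in case ctg_pass res \<kappa> w us S' (Suc j) of
              (S'', j', cs) \<Rightarrow> (S'', j', (w, S, u, j, b) # cs))
      else ctg_pass res \<kappa> w us S j)"

text \<open>State of CTG after k passes of the while-loop (the k-th pass, k = 0,1,..., uses
  threshold d (1-alpha)^k).\<close>
fun ctg_state :: "(real \<Rightarrow> nat \<Rightarrow> bool) \<Rightarrow> nat \<Rightarrow> real \<Rightarrow> real \<Rightarrow> 'a list \<Rightarrow> nat
                   \<Rightarrow> 'a set \<times> nat \<times> 'a call list" where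
  "ctg_state res \<kappa> d \<alpha> us 0 = ({}, 0, [])"
| "ctg_state res \<kappa> d \<alpha> us (Suc k) =
     (case ctg_state res \<kappa> d \<alpha> us k of
        (S, j, cs) \<Rightarrow> (case ctg_pass res \<kappa> (d * (1 - \<alpha>) ^ k) us S j of
                         (S', j', cs') \<Rightarrow> (S', j', cs @ cs')))"

definition ctg_d :: "real \<Rightarrow> real \<Rightarrow> real \<Rightarrow> 'a list \<Rightarrow> ('a \<Rightarrow> nat \<Rightarrow> real) \<Rightarrow> real" where
  "ctg_d R \<epsilon> \<delta> us \<rho> = Max ((\<lambda>s. avg (\<rho> s) (N1 R (length us) \<epsilon> \<delta>)) ` set us)"

text \<open>All CS calls made during the run of CTG(eps,delta,alpha): the ground set U is
  enumerated by the list us, xi j is the sample sequence of the j-th CS call and rho s the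
  sample sequence used for the initial estimate of f({s}). Pass k is executed iff the
  while-condition w > alpha d / kappa held at the start of passes 0..k.\<close>
definition ctg_calls :: "real \<Rightarrow> nat \<Rightarrow> real \<Rightarrow> real \<Rightarrow> real \<Rightarrow> 'a list
                          \<Rightarrow> ('a \<Rightarrow> nat \<Rightarrow> real) \<Rightarrow> (nat \<Rightarrow> nat \<Rightarrow> real) \<Rightarrow> 'a call set" where
  "ctg_calls R \<kappa> \<epsilon> \<delta> \<alpha> us \<rho> \<xi> =
     (let n = length us;
          d = ctg_d R \<epsilon> \<delta> us \<rho>;
          res = (\<lambda>w j. CS R n \<kappa> \<alpha> w \<epsilon> \<delta> (\<xi> j))
      in {c. \<exists>k. (\<forall>i<k. d * (1 - \<alpha>) ^ i > \<alpha> * d / real \<kappa>) \<and>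
                 c \<in> set (snd (snd (ctg_state res \<kappa> d \<alpha> us k)))})"

end

theory Submission
  imports Defs
begin

text \<open>Whichever test of CS decides a call, E2 (at an early stop after t samples) or E3 (when
  the loop runs to completion) places the true gain within the width of that test of the
  estimate, so the test that fired certifies the corresponding bound.\<close>

lemma CS_correct:
  assumes conf: "\<And>t. 1 \<le> t \<Longrightarrow> t \<le> N2 R n \<kappa> \<alpha> \<epsilon> \<delta> \<Longrightarrow> \<bar>avg X t - m\<bar> \<le> Cconf R n \<kappa> \<alpha> \<delta> t"
    and final: "\<bar>avg X (N2 R n \<kappa> \<alpha> \<epsilon> \<delta>) - m\<bar> \<le> \<epsilon>"
  shows "(CS R n \<kappa> \<alpha> w \<epsilon> \<delta> X \<longrightarrow> m \<ge> w - \<epsilon>) \<and> (\<not> CS R n \<kappa> \<alpha> w \<epsilon> \<delta> X \<longrightarrow> m \<le> w + \<epsilon>)"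
proof -
  define N where "N = N2 R n \<kappa> \<alpha> \<epsilon> \<delta>"
  define C where "C = Cconf R n \<kappa> \<alpha> \<delta>"
  define T where "T = {t. 1 \<le> t \<and> t \<le> N \<and> (avg X t - C t \<ge> w - \<epsilon> \<or> avg X t + C t \<le> w + \<epsilon>)}"
  have CS_eq: "CS R n \<kappa> \<alpha> w \<epsilon> \<delta> X =
      (if T \<noteq> {} then avg X (Min T) - C (Min T) \<ge> w - \<epsilon> else avg X N \<ge> w)"
    unfolding CS_def N_def C_def T_def Let_def by simp
  show ?thesis
  proof (cases "T = {}")
    case True
    then show ?thesis using CS_eq final unfolding N_def by (auto simp: abs_le_iff)
  next
    case False
    have "finite T" unfolding T_def by (rule finite_subset[of _ "{..N}"]) auto
    with False have "Min T \<in> T" by simp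
    then have stop: "1 \<le> Min T" "Min T \<le> N"
      and fired: "avg X (Min T) - C (Min T) \<ge> w - \<epsilon> \<or> avg X (Min T) + C (Min T) \<le> w + \<epsilon>"
      unfolding T_def by auto
    have "\<bar>avg X (Min T) - m\<bar> \<le> C (Min T)" using conf stop unfolding C_def N_def by simp
    then show ?thesis using CS_eq False fired by (auto simp: abs_le_iff)
  qed
qed

lemma ctg_pass_call_result:
  "(w', S', u, j', b) \<in> set (snd (snd (ctg_pass res \<kappa> w us S j))) \<Longrightarrow> b = res w' j'"
proof (induction us arbitrary: S j)
  case Nil
  then show ?case by simp
next
  case (Cons a us)
  show ?case
  proof (cases "card S < \<kappa>")
    case True
    define S_next where "S_next = (if res w j then insert a S else S)"
    obtain S'' j'' cs where rest: "ctg_pass res \<kappa> w us S_next (Suc j) = (S'', j'', cs)"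
      by (metis prod_cases3)
    from Cons.prems True rest have "(w', S', u, j', b) = (w, S, a, j, res w j) \<or> (w', S', u, j', b) \<in> set cs"
      by (simp add: Let_def S_next_def)
    then show ?thesis using Cons.IH[of S_next "Suc j"] rest by auto
  next
    case False
    then show ?thesis using Cons by simp
  qed
qed

lemma ctg_state_call_result:
  "(w', S', u, j', b) \<in> set (snd (snd (ctg_state res \<kappa> d \<alpha> us k))) \<Longrightarrow> b = res w' j'"
proof (induction k)
  case 0
  then show ?case by simp
next
  case (Suc k)
  obtain S j cs where before: "ctg_state res \<kappa> d \<alpha> us k = (S, j, cs)" by (metis prod_cases3)
  obtain S'' j'' cs' where pass: "ctg_pass res \<kappa> (d * (1 - \<alpha>) ^ k) us S j = (S'', j'', cs')"
    by (metis prod_cases3)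
  from Suc.prems before pass have "(w', S', u, j', b) \<in> set cs \<or> (w', S', u, j', b) \<in> set cs'"
    by simp
  then show ?case
  proof
    assume "(w', S', u, j', b) \<in> set cs"
    then show ?case using Suc.IH before by simp
  next
    assume "(w', S', u, j', b) \<in> set cs'"
    then show ?case using pass by (metis ctg_pass_call_result snd_conv)
  qed
qed

lemma ctg_calls_result:
  "(w, S, u, j, b) \<in> ctg_calls R \<kappa> \<epsilon> \<delta> \<alpha> us \<rho> \<xi> \<Longrightarrow> b = CS R (length us) \<kappa> \<alpha> w \<epsilon> \<delta> (\<xi> j)"
  unfolding ctg_calls_def Let_def by (auto dest: ctg_state_call_result)

theorem lemma4:
  fixes U :: "'a set" and us :: "'a list" and f :: "'a set \<Rightarrow> real"
    and \<kappa> :: nat and R \<epsilon> \<delta> \<alpha> :: real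
    and \<rho> :: "'a \<Rightarrow> nat \<Rightarrow> real" and \<xi> :: "nat \<Rightarrow> nat \<Rightarrow> real"
  assumes U: "finite U" "U \<noteq> {}" "distinct us" "set us = U"
    and f_nonneg: "\<forall>A. A \<subseteq> U \<longrightarrow> f A \<ge> 0"
    and f_mono: "monotone_set_fun U f"
    and f_sub: "submodular_set_fun U f"
    and kappa: "\<kappa> > 0"
    and params: "0 < \<epsilon>" "\<epsilon> < 1" "0 < \<delta>" "\<delta> < 1" "0 < \<alpha>" "\<alpha> < 1"
    and samples: "\<forall>s t. 0 \<le> \<rho> s t \<and> \<rho> s t \<le> R" "\<forall>j t. 0 \<le> \<xi> j t \<and> \<xi> j t \<le> R"
    and E1: "(MAX s\<in>U. f {s}) - \<epsilon> \<le> ctg_d R \<epsilon> \<delta> us \<rho>"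
            "ctg_d R \<epsilon> \<delta> us \<rho> \<le> (MAX s\<in>U. f {s}) + \<epsilon>"
    and E2: "\<forall>(w, S, u, j, b) \<in> ctg_calls R \<kappa> \<epsilon> \<delta> \<alpha> us \<rho> \<xi>. \<forall>t \<ge> 1.
               \<bar>avg (\<xi> j) t - marg f S u\<bar> \<le> Cconf R (card U) \<kappa> \<alpha> \<delta> t"
    and E3: "\<forall>(w, S, u, j, b) \<in> ctg_calls R \<kappa> \<epsilon> \<delta> \<alpha> us \<rho> \<xi>.
               \<bar>avg (\<xi> j) (N2 R (card U) \<kappa> \<alpha> \<epsilon> \<delta>) - marg f S u\<bar> \<le> \<epsilon>"
  shows "\<forall>(w, S, u, j, b) \<in> ctg_calls R \<kappa> \<epsilon> \<delta> \<alpha> us \<rho> \<xi>.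
           (b \<longrightarrow> marg f S u \<ge> w - \<epsilon>) \<and> (\<not> b \<longrightarrow> marg f S u \<le> w + \<epsilon>)"
proof (intro ballI, clarify)
  fix w S u j b
  assume call: "(w, S, u, j, b) \<in> ctg_calls R \<kappa> \<epsilon> \<delta> \<alpha> us \<rho> \<xi>"
  have "length us = card U" using U by (metis distinct_card)
  then have b: "b = CS R (card U) \<kappa> \<alpha> w \<epsilon> \<delta> (\<xi> j)" using ctg_calls_result[OF call] by simp
  have "\<bar>avg (\<xi> j) t - marg f S u\<bar> \<le> Cconf R (card U) \<kappa> \<alpha> \<delta> t" if "1 \<le> t" for t
    using E2 call that by fast
  moreover have "\<bar>avg (\<xi> j) (N2 R (card U) \<kappa> \<alpha> \<epsilon> \<delta>) - marg f S u\<bar> \<le> \<epsilon>"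
    using E3 call by fast
  ultimately show "(b \<longrightarrow> marg f S u \<ge> w - \<epsilon>) \<and> (\<not> b \<longrightarrow> marg f S u \<le> w + \<epsilon>)"
    unfolding b by (intro CS_correct)
qed

end
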